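(* Let $S_8=\mathrm{diag}(1,-1,1,-1,1,-1,1,-1)$. For every $a\in C\ell_{1,2}$, $$L(a')=L(a)^T,\quad R(a')=R(a)^T,\quad L(\bar a)=S_8L(a)^TS_8,\quad R(\bar a)=S_8R(a)^TS_8.$$
   Context: $C\ell_{1,2}$ is the real Clifford algebra generated by $i_1,i_2,i_3$ with $i_1^2=1$, $i_2^2=i_3^2=-1$ and $i_ti_m=-i_mi_t$ for $t\neq m$, with real basis $e_0=1$, $e_1=i_1$, $e_2=i_2$, $e_3=i_1i_2$, $e_4=i_3$, $e_5=i_1i_3$, $e_6=i_2i_3$, $e_7=i_1i_2i_3$. For $x=\sum_{t=0}^7x_te_t$ write $\overrightarrow{x}=(x_0,\dots,x_7)^T\in\mathbb{R}^8$. For $a\in C\ell_{1,2}$, $L(a)$ and $R(a)$ are the real $8\times8$ matrices with $\overrightarrow{ax}=L(a)\overrightarrow{x}$ and $\overrightarrow{xa}=R(a)\overrightarrow{x}$ for all $x\in C\ell_{1,2}$. For $a=\sum a_te_t$: $\bar a=a_0-a_1e_1-a_2e_2-a_3e_3-a_4e_4-a_5e_5-a_6e_6+a_7e_7$ and $a'=a_0+a_1e_1-a_2e_2+a_3e_3-a_4e_4+a_5e_5-a_6e_6-a_7e_7$. *)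

theory Defs
  imports "Jordan_Normal_Form.Matrix"
begin

text \<open>Elements of the Clifford algebra Cl(1,2) are represented by their real coefficient
vectors x = (x_0,...,x_7) of dimension 8 w.r.t. the basis e_0,...,e_7.
The basis element e_s corresponds to the bitmask s over the generators i_1 (bit 0),
i_2 (bit 1), i_3 (bit 2), with factors in increasing order: e_1 = i_1, e_2 = i_2,
e_3 = i_1 i_2, e_4 = i_3, e_5 = i_1 i_3, e_6 = i_2 i_3, e_7 = i_1 i_2 i_3.\<close>

definition gen_sq :: "nat \<Rightarrow> real" where
  "gen_sq k = (if k = 0 then 1 else -1)"

text \<open>Sign in e_s e_t = cl_sign s t * e_(s xor t): (-1)^(number of transpositions needed
to sort the generator word) times the squares of the common generators.\<close>
definition cl_sign :: "nat \<Rightarrow> nat \<Rightarrow> real" where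
  "cl_sign s t =
     (-1) ^ card {(i, j). i < 3 \<and> j < i \<and> bit s i \<and> bit t j}
     * (\<Prod>k\<in>{k. k < 3 \<and> bit s k \<and> bit t k}. gen_sq k)"

definition cl_mult :: "real vec \<Rightarrow> real vec \<Rightarrow> real vec" where
  "cl_mult x y = vec 8 (\<lambda>u. \<Sum>s<8. \<Sum>t<8.
      (if xor s t = u then cl_sign s t * (x $ s) * (y $ t) else 0))"

definition Lmat :: "real vec \<Rightarrow> real mat" where
  "Lmat a = mat 8 8 (\<lambda>(u, t). cl_mult a (unit_vec 8 t) $ u)"

definition Rmat :: "real vec \<Rightarrow> real mat" where
  "Rmat a = mat 8 8 (\<lambda>(u, t). cl_mult (unit_vec 8 t) a $ u)"

definition cl_bar :: "real vec \<Rightarrow> real vec" where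
  "cl_bar a = vec 8 (\<lambda>t. (if t = 0 \<or> t = 7 then 1 else -1) * a $ t)"

definition cl_prime :: "real vec \<Rightarrow> real vec" where
  "cl_prime a = vec 8 (\<lambda>t. (if t \<in> {0, 1, 3, 5} then 1 else -1) * a $ t)"

definition S8 :: "real mat" where
  "S8 = mat 8 8 (\<lambda>(i, j). if i = j then (-1) ^ i else 0)"

end

theory Submission
  imports Defs
begin

(* Write e_s e_t = sigma(s,t) e_(s xor t). The (u,t) entry of L(a) is sigma(k,t) a_k and that of
   R(a) is sigma(t,k) a_k, where k = u xor t; transposition swaps u and t but keeps k. Since a' maps
   e_k to e_k^2 e_k = e_k^-1, the identity L(a') = L(a)^T reduces to
   sigma(k, k xor t) = sigma(k,k) sigma(k,t), the coefficient form of e_k (e_k e_t) = e_k^2 e_t,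
   and R(a') = R(a)^T likewise to (e_t e_k) e_k = e_t e_k^2. Finally, a-bar is the image of a'
   under the automorphism i_1 |-> -i_1, which sends e_k to (-1)^k e_k; it multiplies the (u,t)
   entry of L and R by (-1)^(u xor t) = (-1)^u (-1)^t, i.e. it conjugates them by S_8. *)

lemma xor_less_power2:
  fixes u t :: nat
  assumes "u < 2 ^ n" "t < 2 ^ n"
  shows "xor u t < 2 ^ n"
proof -
  have "xor u t = take_bit n (xor u t)"
    using assms by (simp add: take_bit_nat_eq_self)
  then show ?thesis
    by (metis take_bit_nat_less_exp)
qed

lemma sum_xor_delta:
  fixes s u :: nat and f :: "nat \<Rightarrow> 'a::comm_monoid_add"
  assumes "s < 2 ^ n" "u < 2 ^ n"
  shows "(\<Sum>t<2 ^ n. if xor s t = u then f t else 0) = f (xor s u)"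
proof -
  have "xor s t = u \<longleftrightarrow> t = xor s u" for t
    by (auto simp: bit_eq_iff bit_xor_iff)
  then show ?thesis
    using xor_less_power2[OF assms] by simp
qed

lemma minus_one_power_xor:
  "(-1 :: 'a::ring_1) ^ xor u t = (-1) ^ u * (-1) ^ t" for u t :: nat
  by (simp add: minus_one_power_iff even_xor_iff)

lemma cl_mult_index_left:
  assumes "u < 8"
  shows "cl_mult x y $ u = (\<Sum>s<8. cl_sign s (xor s u) * x $ s * y $ xor s u)"
proof -
  have "(\<Sum>t<8. if xor s t = u then cl_sign s t * x $ s * y $ t else 0)
      = cl_sign s (xor s u) * x $ s * y $ xor s u" if "s < 8" for s
    using sum_xor_delta[of s 3 u] that assms by simp
  then show ?thesis
    using assms by (simp add: cl_mult_def)
qed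

lemma cl_mult_index_right:
  assumes "u < 8"
  shows "cl_mult x y $ u = (\<Sum>t<8. cl_sign (xor t u) t * x $ xor t u * y $ t)"
proof -
  have inner: "(\<Sum>s<8. if xor s t = u then cl_sign s t * x $ s * y $ t else 0)
      = cl_sign (xor t u) t * x $ xor t u * y $ t" if "t < 8" for t
    using sum_xor_delta[of t 3 u] that assms by (simp add: xor.commute)
  have "cl_mult x y $ u = (\<Sum>s<8. \<Sum>t<8. if xor s t = u then cl_sign s t * x $ s * y $ t else 0)"
    using assms by (simp add: cl_mult_def)
  also have "\<dots> = (\<Sum>t<8. \<Sum>s<8. if xor s t = u then cl_sign s t * x $ s * y $ t else 0)"
    by (rule sum.swap)
  also have "\<dots> = (\<Sum>t<8. cl_sign (xor t u) t * x $ xor t u * y $ t)"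
    using inner by simp
  finally show ?thesis .
qed

lemma Lmat_index:
  assumes "u < 8" "t < 8"
  shows "Lmat a $$ (u, t) = cl_sign (xor u t) t * a $ xor u t"
proof -
  have "Lmat a $$ (u, t) = (\<Sum>t'<8. cl_sign (xor t' u) t' * a $ xor t' u * unit_vec 8 t $ t')"
    using assms by (simp add: Lmat_def cl_mult_index_right)
  also have "\<dots> = (\<Sum>t'<8. if t' = t then cl_sign (xor t' u) t' * a $ xor t' u else 0)"
    by (intro sum.cong) (auto simp: unit_vec_def)
  finally show ?thesis
    using assms by (simp add: xor.commute)
qed

lemma Rmat_index:
  assumes "u < 8" "t < 8"
  shows "Rmat a $$ (u, t) = cl_sign t (xor u t) * a $ xor u t"
proof -
  have "Rmat a $$ (u, t) = (\<Sum>s<8. cl_sign s (xor s u) * unit_vec 8 t $ s * a $ xor s u)"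
    using assms by (simp add: Rmat_def cl_mult_index_left)
  also have "\<dots> = (\<Sum>s<8. if s = t then cl_sign s (xor s u) * a $ xor s u else 0)"
    by (intro sum.cong) (auto simp: unit_vec_def)
  finally show ?thesis
    using assms by (simp add: xor.commute)
qed

(* The first three factors count the inversions i_2 i_1, i_3 i_1, i_3 i_2; the last two are
   i_2^2 = i_3^2 = -1. *)
lemma cl_sign_bits:
  "cl_sign s t =
     (if bit s 1 \<and> bit t 0 then -1 else 1) * (if bit s 2 \<and> bit t 0 then -1 else 1)
     * (if bit s 2 \<and> bit t 1 then -1 else 1)
     * (if bit s 1 \<and> bit t 1 then -1 else 1) * (if bit s 2 \<and> bit t 2 then -1 else 1)"
proof -
  have filter_insert: "Set.filter P (insert x A) = (if P x then insert x (Set.filter P A) else Set.filter P A)"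
    for P and x :: 'a and A by auto
  have inversions: "{(i, j). i < 3 \<and> j < i \<and> bit s i \<and> bit t j}
      = Set.filter (\<lambda>(i, j). bit s i \<and> bit t j) {(1, 0), (2, 0), (2, 1)}"
    by (auto simp: less_Suc_eq numeral_3_eq_3 numeral_2_eq_2)
  have common: "{k. k < 3 \<and> bit s k \<and> bit t k} = Set.filter (\<lambda>k. bit s k \<and> bit t k) {0, 1, 2}"
    by (auto simp: less_Suc_eq numeral_3_eq_3 numeral_2_eq_2)
  show ?thesis
    unfolding cl_sign_def inversions common filter_insert
    by (cases "bit s 0"; cases "bit s 1"; cases "bit s 2"; cases "bit t 0"; cases "bit t 1"; cases "bit t 2")
      (simp_all add: gen_sq_def)
qed

lemma cl_sign_left_square: "cl_sign k (xor k t) = cl_sign k k * cl_sign k t"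
  by (cases "bit k 0"; cases "bit k 1"; cases "bit k 2"; cases "bit t 0"; cases "bit t 1"; cases "bit t 2")
    (simp_all add: cl_sign_bits bit_xor_iff)

lemma cl_sign_right_square: "cl_sign (xor t k) k = cl_sign t k * cl_sign k k"
  by (cases "bit k 0"; cases "bit k 1"; cases "bit k 2"; cases "bit t 0"; cases "bit t 1"; cases "bit t 2")
    (simp_all add: cl_sign_bits bit_xor_iff)

lemma less_8_cases: "(k::nat) < 8 \<Longrightarrow> k \<in> {0, 1, 2, 3, 4, 5, 6, 7}"
  by auto

lemma cl_prime_eq_rescale: "cl_prime a = vec 8 (\<lambda>k. cl_sign k k * a $ k)"
proof -
  have "(if k \<in> {0, 1, 3, 5} then 1 else -1) = cl_sign k k" if "k < 8" for k :: nat
    using less_8_cases[OF that] by (auto simp: cl_sign_bits bit_0)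
  then show ?thesis
    by (auto simp: cl_prime_def)
qed

lemma cl_bar_eq_parity_twist: "cl_bar a = vec 8 (\<lambda>k. (-1) ^ k * cl_prime a $ k)"
proof -
  have "(if k = 0 \<or> k = 7 then 1 else -1) = (-1) ^ k * (if k \<in> {0, 1, 3, 5} then 1 else -1 :: real)"
    if "k < 8" for k :: nat
    using less_8_cases[OF that] by auto
  then show ?thesis
    by (auto simp: cl_bar_def cl_prime_def)
qed

lemma diagonal_conj_index:
  fixes d :: "nat \<Rightarrow> 'a::comm_ring_1" and n :: nat
  defines "D \<equiv> mat n n (\<lambda>(i, j). if i = j then d i else 0)"
  assumes "M \<in> carrier_mat n n" "i < n" "j < n"
  shows "(D * M * D) $$ (i, j) = d i * M $$ (i, j) * d j"
proof -
  have "(D * M) $$ (i, l) = d i * M $$ (i, l)" if "l < n" for l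
  proof -
    have "(D * M) $$ (i, l) = (\<Sum>k<n. (if i = k then d i else 0) * M $$ (k, l))"
      using assms that by (simp add: D_def scalar_prod_def lessThan_atLeast0)
    also have "\<dots> = (\<Sum>k<n. if k = i then d i * M $$ (i, l) else 0)"
      by (rule sum.cong) auto
    finally show ?thesis
      using assms by simp
  qed
  then have "(D * M * D) $$ (i, j) = (\<Sum>k<n. d i * M $$ (i, k) * (if k = j then d k else 0))"
    using assms by (simp add: D_def scalar_prod_def lessThan_atLeast0)
  also have "\<dots> = (\<Sum>k<n. if k = j then d i * M $$ (i, j) * d j else 0)"
    by (rule sum.cong) auto
  finally show ?thesis
    using assms by simp
qed

lemma S8_conj_eqI:
  assumes "M \<in> carrier_mat 8 8" "N \<in> carrier_mat 8 8"
    and "\<And>u t. u < 8 \<Longrightarrow> t < 8 \<Longrightarrow> N $$ (u, t) = (-1) ^ xor u t * M $$ (u, t)"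
  shows "N = S8 * M * S8"
proof (rule eq_matI)
  fix u t assume "u < dim_row (S8 * M * S8)" "t < dim_col (S8 * M * S8)"
  then have "u < 8" "t < 8"
    by (simp_all add: S8_def)
  then show "N $$ (u, t) = (S8 * M * S8) $$ (u, t)"
    using assms diagonal_conj_index[of M 8 u t "\<lambda>i. (-1) ^ i"]
    by (simp add: S8_def minus_one_power_xor)
qed (use assms in \<open>simp_all add: S8_def\<close>)

lemma dim_Lmat [simp]: "dim_row (Lmat a) = 8" "dim_col (Lmat a) = 8"
  by (simp_all add: Lmat_def)

lemma dim_Rmat [simp]: "dim_row (Rmat a) = 8" "dim_col (Rmat a) = 8"
  by (simp_all add: Rmat_def)

lemma Lmat_rescale_index:
  assumes "u < 8" "t < 8"
  shows "Lmat (vec 8 (\<lambda>k. c k * a $ k)) $$ (u, t) = c (xor u t) * Lmat a $$ (u, t)"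
  using assms xor_less_power2[of u 3 t] by (simp add: Lmat_index)

lemma Rmat_rescale_index:
  assumes "u < 8" "t < 8"
  shows "Rmat (vec 8 (\<lambda>k. c k * a $ k)) $$ (u, t) = c (xor u t) * Rmat a $$ (u, t)"
  using assms xor_less_power2[of u 3 t] by (simp add: Rmat_index)

lemma Lmat_parity_twist: "Lmat (vec 8 (\<lambda>k. (-1) ^ k * a $ k)) = S8 * Lmat a * S8"
  by (rule S8_conj_eqI) (simp_all add: carrier_matI Lmat_rescale_index)

lemma Rmat_parity_twist: "Rmat (vec 8 (\<lambda>k. (-1) ^ k * a $ k)) = S8 * Rmat a * S8"
  by (rule S8_conj_eqI) (simp_all add: carrier_matI Rmat_rescale_index)

lemma Lmat_cl_prime: "Lmat (cl_prime a) = (Lmat a)\<^sup>T"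
proof (rule eq_matI)
  fix u t assume "u < dim_row (Lmat a)\<^sup>T" "t < dim_col (Lmat a)\<^sup>T"
  then have u: "u < 8" and t: "t < 8"
    by simp_all
  define k where "k = xor u t"
  have k: "k < 8"
    using xor_less_power2[of u 3 t] u t by (simp add: k_def)
  have kt: "xor k t = u"
    by (simp add: k_def xor.assoc)
  have tu: "xor t u = k"
    by (simp add: k_def xor.commute)
  have "Lmat (cl_prime a) $$ (u, t) = cl_sign k k * cl_sign k t * a $ k"
    using u t k by (simp add: cl_prime_eq_rescale Lmat_index k_def)
  also have "\<dots> = cl_sign k (xor k t) * a $ k"
    by (simp add: cl_sign_left_square)
  also have "\<dots> = (Lmat a)\<^sup>T $$ (u, t)"
    using u t by (simp add: Lmat_index[OF t u] kt tu)
  finally show "Lmat (cl_prime a) $$ (u, t) = (Lmat a)\<^sup>T $$ (u, t)" .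
qed simp_all

lemma Rmat_cl_prime: "Rmat (cl_prime a) = (Rmat a)\<^sup>T"
proof (rule eq_matI)
  fix u t assume "u < dim_row (Rmat a)\<^sup>T" "t < dim_col (Rmat a)\<^sup>T"
  then have u: "u < 8" and t: "t < 8"
    by simp_all
  define k where "k = xor u t"
  have k: "k < 8"
    using xor_less_power2[of u 3 t] u t by (simp add: k_def)
  have tk: "xor t k = u"
    by (simp add: k_def xor.commute[of t] xor.assoc)
  have tu: "xor t u = k"
    by (simp add: k_def xor.commute)
  have "Rmat (cl_prime a) $$ (u, t) = cl_sign t k * cl_sign k k * a $ k"
    using u t k by (simp add: cl_prime_eq_rescale Rmat_index k_def)
  also have "\<dots> = cl_sign (xor t k) k * a $ k"
    by (simp add: cl_sign_right_square)
  also have "\<dots> = (Rmat a)\<^sup>T $$ (u, t)"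
    using u t by (simp add: Rmat_index[OF t u] tk tu)
  finally show "Rmat (cl_prime a) $$ (u, t) = (Rmat a)\<^sup>T $$ (u, t)" .
qed simp_all

theorem proposition2p2:
  fixes a :: "real vec"
  assumes "dim_vec a = 8"
  shows "Lmat (cl_prime a) = (Lmat a)\<^sup>T
       \<and> Rmat (cl_prime a) = (Rmat a)\<^sup>T
       \<and> Lmat (cl_bar a) = S8 * (Lmat a)\<^sup>T * S8
       \<and> Rmat (cl_bar a) = S8 * (Rmat a)\<^sup>T * S8"
proof (intro conjI)
  \<comment> \<open>Lmat and Rmat read only the first eight coordinates.\<close>
  show "Lmat (cl_prime a) = (Lmat a)\<^sup>T"
    by (rule Lmat_cl_prime)
  show "Rmat (cl_prime a) = (Rmat a)\<^sup>T"
    by (rule Rmat_cl_prime)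
  show "Lmat (cl_bar a) = S8 * (Lmat a)\<^sup>T * S8"
    by (simp only: cl_bar_eq_parity_twist Lmat_parity_twist Lmat_cl_prime)
  show "Rmat (cl_bar a) = S8 * (Rmat a)\<^sup>T * S8"
    by (simp only: cl_bar_eq_parity_twist Rmat_parity_twist Rmat_cl_prime)
qed

end
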